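(* Assume the setup of the context. Let $f\in C^r(\mathbb R^m,\mathbb R^{d^+})$ with $f\circ R=f$ on $\Lambda$ and $\int_\Lambda f\,d\mu=0$, and let $h\in C^{r+1}(\mathbb R^m,\mathbb R^{d^-})$ with $h(Ry)=h(y)$ for all $y\in\mathbb R^m$. Then there exists an admissible $v$ such that the limit defining $E_0(v)$ exists and $E_0(v)=\int_\Lambda f\otimes h\,d\mu$.
   Context: Let $r\ge1$, $\Lambda\subset\mathbb R^m$ compact, and $g\in C^r(\mathbb R^m,\mathbb R^m)$ such that $\Lambda$ is invariant under the flow $g_t$ of $\dot y=g(y)$. Let $\mu$ be a Borel probability measure on $\Lambda$ that is $g_t$-invariant, ergodic and mixing (i.e. $\int_\Lambda \phi\,(\psi\circ g_t)\,d\mu\to\int\phi\,d\mu\int\psi\,d\mu$ as $t\to\infty$ for $\phi,\psi\in L^2(\mu)$). Let $R\in\mathbb R^{m\times m}$ with $R^2=I$, $R(\Lambda)=\Lambda$, $\mu$ $R$-invariant, and $g(Ry)=-Rg(y)$ for all $y\in\Lambda$. Let $d=d^++d^-$ and $A=\mathrm{diag}(I_{d^+},-I_{d^-})$. A function $v\in C^r(\mathbb R^m,\mathbb R^d)$ is admissible if $v(Ry)=Av(y)$ for all $y\in\Lambda$ and $\int_\Lambda v\,d\mu=0$; write $v=(v^+,v^-)$ with $v^\pm$ valued in $\mathbb R^{d^\pm}$ and set $E_0(v)=2\lim_{T\to\infty}\int_0^T\int_\Lambda v^+\otimes(v^-\circ g_t)\,d\mu\,dt\in\mathbb R^{d^+\times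 d^-}$, where $u\otimes w=uw^T$. *)

theory Defs
  imports "HOL-Analysis.Analysis" "HOL-Probability.Probability"
begin

fun Ck :: "nat \<Rightarrow> ('a::real_normed_vector \<Rightarrow> 'b::real_normed_vector) \<Rightarrow> bool" where
  "Ck 0 f = continuous_on UNIV f"
| "Ck (Suc k) f = ((\<forall>x. f differentiable (at x)) \<and> continuous_on UNIV f \<and>
       (\<forall>u. Ck k (\<lambda>x. frechet_derivative f (at x) u)))"

definition is_flow_on :: "(real^'m \<Rightarrow> real^'m) \<Rightarrow> (real \<Rightarrow> real^'m \<Rightarrow> real^'m) \<Rightarrow> (real^'m) set \<Rightarrow> bool" where
  "is_flow_on g fl Lam \<longleftrightarrow> (\<forall>y\<in>Lam. fl 0 y = y \<and> (\<forall>t. fl t y \<in> Lam \<and>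
      ((\<lambda>s. fl s y) has_vector_derivative g (fl t y)) (at t)))"

text \<open>v = (v^+, v^-) : R^m \<rightarrow> R^{d+} \<times> R^{d-}; A = diag(I,-I).\<close>
definition admissible ::
  "nat \<Rightarrow> (real^'m) set \<Rightarrow> real^'m^'m \<Rightarrow> (real^'m) measure \<Rightarrow> (real^'m \<Rightarrow> ((real^'p) \<times> (real^'n))) \<Rightarrow> bool" where
  "admissible r Lam R \<mu> v \<longleftrightarrow> Ck r v \<and>
     (\<forall>y\<in>Lam. v (R *v y) = (fst (v y), - snd (v y))) \<and> integral\<^sup>L \<mu> v = 0"

text \<open>The limit defining E_0(v) exists and equals M (entrywise, u \<otimes> w = u w^T).\<close>
definition E0_is ::
  "(real^'m) measure \<Rightarrow> (real \<Rightarrow> real^'m \<Rightarrow> real^'m) \<Rightarrow> (real^'m \<Rightarrow> ((real^'p) \<times> (real^'n))) \<Rightarrow> real^'n^'p \<Rightarrow> bool" where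
  "E0_is \<mu> fl v M \<longleftrightarrow> (\<forall>i j.
     (\<forall>T\<ge>0. (\<lambda>t. \<integral>x. fst (v x) $ i * snd (v (fl t x)) $ j \<partial>\<mu>) integrable_on {0..T}) \<and>
     ((\<lambda>T. 2 * integral {0..T} (\<lambda>t. \<integral>x. fst (v x) $ i * snd (v (fl t x)) $ j \<partial>\<mu>))
        \<longlongrightarrow> M $ i $ j) at_top)"

end

theory Submission
  imports Defs
begin

text \<open>Take \<open>v = (f, - (1/2) L\<^sub>g h)\<close>, where \<open>L\<^sub>g h = Dh \<cdot> g\<close> is the derivative of \<open>h\<close>
  along the flow. Since \<open>h \<circ> R = h\<close> and \<open>g \<circ> R = - R g\<close>, the function \<open>L\<^sub>g h\<close> is odd
  under \<open>R\<close>, so \<open>v\<close> is admissible, and invariance of \<open>\<mu>\<close> gives \<open>\<integral> L\<^sub>g h d\<mu> = 0\<close>.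
  The correlation \<open>\<integral> f \<otimes> (L\<^sub>g h \<circ> g\<^sub>t) d\<mu>\<close> is the \<open>t\<close>-derivative of
  \<open>K(t) = \<integral> f \<otimes> (h \<circ> g\<^sub>t) d\<mu>\<close>, so the time integral defining \<open>E\<^sub>0(v)\<close> telescopes to
  \<open>K(0) - K(T)\<close>; mixing and \<open>\<integral> f d\<mu> = 0\<close> give \<open>K(T) \<rightarrow> 0\<close>, leaving \<open>K(0) = \<integral> f \<otimes> h d\<mu>\<close>.\<close>

lemma Ck_imp_continuous_on: "Ck k f \<Longrightarrow> continuous_on UNIV f"
  by (cases k) auto

lemma Ck_Suc_imp_Ck: "Ck (Suc k) f \<Longrightarrow> Ck k f"
  by (induction k arbitrary: f) auto

lemma Ck_const: "Ck k (\<lambda>x::'a::real_normed_vector. c::'b::real_normed_vector)"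
proof (induction k arbitrary: c)
  case (Suc k)
  have "frechet_derivative (\<lambda>x::'a. c) (at x) = (\<lambda>u. 0)" for x
    by (rule frechet_derivative_at[symmetric]) simp
  with Suc show ?case by simp
qed simp

lemma Ck_add: "Ck k f \<Longrightarrow> Ck k g \<Longrightarrow> Ck k (\<lambda>x. f x + g x)"
proof (induction k arbitrary: f g)
  case (Suc k)
  have "frechet_derivative (\<lambda>x. f x + g x) (at x) =
      (\<lambda>u. frechet_derivative f (at x) u + frechet_derivative g (at x) u)" for x
    by (rule frechet_derivative_at[symmetric])
      (use Suc.prems in \<open>auto intro!: has_derivative_add simp: frechet_derivative_works[symmetric]\<close>)
  with Suc show ?case by (auto simp: continuous_on_add)
qed (simp add: continuous_on_add)

lemma Ck_bounded_linear: "bounded_linear L \<Longrightarrow> Ck k f \<Longrightarrow> Ck k (\<lambda>x. L (f x))"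
proof (induction k arbitrary: f)
  case (Suc k)
  have "((\<lambda>x. L (f x)) has_derivative (\<lambda>u. L (frechet_derivative f (at x) u))) (at x)" for x
    by (rule bounded_linear.has_derivative[OF Suc.prems(1)])
      (use Suc.prems(2) in \<open>simp add: frechet_derivative_works[symmetric]\<close>)
  then have "(\<lambda>x. L (f x)) differentiable (at x)"
    and "frechet_derivative (\<lambda>x. L (f x)) (at x) = (\<lambda>u. L (frechet_derivative f (at x) u))" for x
    by (auto intro: differentiableI frechet_derivative_at[symmetric])
  with Suc show ?case by (auto intro: bounded_linear.continuous_on)
qed (simp add: bounded_linear.continuous_on)

lemma Ck_scaleR: "Ck k (a::'a::real_normed_vector \<Rightarrow> real) \<Longrightarrow> Ck k b \<Longrightarrow> Ck k (\<lambda>x. a x *\<^sub>R b x)"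
proof (induction k arbitrary: a b)
  case (Suc k)
  have "frechet_derivative (\<lambda>x. a x *\<^sub>R b x) (at x) =
      (\<lambda>u. a x *\<^sub>R frechet_derivative b (at x) u + frechet_derivative a (at x) u *\<^sub>R b x)" for x
    by (rule frechet_derivative_at[symmetric])
      (use Suc.prems in \<open>auto intro!: has_derivative_scaleR simp: frechet_derivative_works[symmetric]\<close>)
  moreover have "Ck k (\<lambda>x. a x *\<^sub>R frechet_derivative b (at x) u + frechet_derivative a (at x) u *\<^sub>R b x)" for u
    using Suc.prems by (intro Ck_add Suc.IH) (auto intro: Ck_Suc_imp_Ck)
  ultimately show ?case using Suc.prems by (auto simp: continuous_on_scaleR)
qed (simp add: continuous_on_scaleR)

lemma Ck_sum: "finite S \<Longrightarrow> (\<And>i. i \<in> S \<Longrightarrow> Ck k (F i)) \<Longrightarrow> Ck k (\<lambda>x. \<Sum>i\<in>S. F i x)"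
  by (induction S rule: finite_induct) (auto intro: Ck_add Ck_const)

lemma Ck_Pair: "Ck k f \<Longrightarrow> Ck k g \<Longrightarrow> Ck k (\<lambda>x. (f x, g x))"
  using Ck_add[OF Ck_bounded_linear[of "\<lambda>a. (a, 0)" k f] Ck_bounded_linear[of "\<lambda>b. (0, b)" k g]]
  by (simp add: bounded_linear_Pair bounded_linear_zero bounded_linear_ident)

definition lie_derivative :: "('a::real_normed_vector \<Rightarrow> 'a) \<Rightarrow> ('a \<Rightarrow> 'b::real_normed_vector) \<Rightarrow> 'a \<Rightarrow> 'b"
  where "lie_derivative g h y = frechet_derivative h (at y) (g y)"

lemma Ck_lie_derivative:
  fixes g :: "'a::euclidean_space \<Rightarrow> 'a" and h :: "'a \<Rightarrow> 'b::real_normed_vector"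
  assumes g: "Ck k g" and h: "Ck (Suc k) h"
  shows "Ck k (lie_derivative g h)"
proof -
  have "lie_derivative g h x = (\<Sum>b\<in>Basis. (g x \<bullet> b) *\<^sub>R frechet_derivative h (at x) b)" for x
  proof -
    have "linear (frechet_derivative h (at x))"
      using h by (simp add: linear_frechet_derivative)
    then show ?thesis
      unfolding lie_derivative_def
      by (subst (1) euclidean_representation[symmetric, of "g x"]) (simp add: linear_sum linear_scale)
  qed
  then have "lie_derivative g h = (\<lambda>x. \<Sum>b\<in>Basis. (g x \<bullet> b) *\<^sub>R frechet_derivative h (at x) b)"
    by (rule ext)
  moreover have "Ck k (\<lambda>x. \<Sum>b\<in>Basis. (g x \<bullet> b) *\<^sub>R frechet_derivative h (at x) b)"
    using h by (intro Ck_sum Ck_scaleR Ck_bounded_linear[OF bounded_linear_inner_left g]) auto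
  ultimately show ?thesis by (simp only:)
qed

lemma lie_derivative_bounded_linear:
  assumes "bounded_linear T" and "h differentiable (at y)"
  shows "lie_derivative g (\<lambda>x. T (h x)) y = T (lie_derivative g h y)"
proof -
  have "((\<lambda>x. T (h x)) has_derivative (\<lambda>u. T (frechet_derivative h (at y) u))) (at y)"
    by (rule bounded_linear.has_derivative[OF assms(1)])
      (use assms(2) in \<open>simp add: frechet_derivative_works[symmetric]\<close>)
  then show ?thesis
    unfolding lie_derivative_def by (simp add: frechet_derivative_at[symmetric])
qed

lemma lie_derivative_reflect:
  assumes L: "bounded_linear L" and hd: "h differentiable (at (L y))"
    and hL: "\<And>x. h (L x) = h x" and gL: "g (L y) = - L (g y)"
  shows "lie_derivative g h (L y) = - lie_derivative g h y"
proof -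
  have "(h has_derivative (\<lambda>u. frechet_derivative h (at (L y)) (L u))) (at y)"
    using has_derivative_compose[OF bounded_linear_imp_has_derivative[OF L]
        hd[unfolded frechet_derivative_works]]
    by (simp add: hL)
  then have "frechet_derivative h (at y) (g y) = frechet_derivative h (at (L y)) (L (g y))"
    by (simp add: frechet_derivative_at[symmetric])
  moreover have "linear (frechet_derivative h (at (L y)))"
    using hd by (rule linear_frechet_derivative)
  ultimately show ?thesis
    unfolding lie_derivative_def gL by (simp add: linear_neg)
qed

lemma has_real_derivative_lie_derivative:
  fixes \<gamma> :: "real \<Rightarrow> 'a::real_normed_vector" and k :: "'a \<Rightarrow> real"
  assumes \<gamma>: "(\<gamma> has_vector_derivative g (\<gamma> t)) (at t)" and k: "k differentiable (at (\<gamma> t))"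
  shows "((\<lambda>s. k (\<gamma> s)) has_real_derivative lie_derivative g k (\<gamma> t)) (at t)"
proof -
  have lin: "linear (frechet_derivative k (at (\<gamma> t)))"
    using k by (rule linear_frechet_derivative)
  have "((\<lambda>s. k (\<gamma> s)) has_derivative (\<lambda>s. frechet_derivative k (at (\<gamma> t)) (s *\<^sub>R g (\<gamma> t)))) (at t)"
    using has_derivative_compose[OF \<gamma>[unfolded has_vector_derivative_def] k[unfolded frechet_derivative_works]] .
  moreover have "(\<lambda>s. frechet_derivative k (at (\<gamma> t)) (s *\<^sub>R g (\<gamma> t))) = (*) (lie_derivative g k (\<gamma> t))"
    by (simp add: fun_eq_iff linear_scale[OF lin] lie_derivative_def)
  ultimately show ?thesis
    by (simp add: has_field_derivative_def)
qed

lemma has_real_derivative_integral_Lipschitz: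
  fixes u :: "real \<Rightarrow> 'a \<Rightarrow> real"
  assumes "finite_measure M"
    and integrable: "\<And>s. integrable M (u s)" and u': "u' \<in> borel_measurable M"
    and deriv: "\<And>x. x \<in> space M \<Longrightarrow> ((\<lambda>s. u s x) has_real_derivative u' x) (at t)"
    and Lipschitz: "\<And>x s. x \<in> space M \<Longrightarrow> \<bar>u s x - u t x\<bar> \<le> C * \<bar>s - t\<bar>"
  shows "((\<lambda>s. \<integral>x. u s x \<partial>M) has_real_derivative (\<integral>x. u' x \<partial>M)) (at t)"
  unfolding has_field_derivative_iff tendsto_at_iff_sequentially comp_def
proof (intro allI impI)
  interpret finite_measure M by fact
  fix X :: "nat \<Rightarrow> real" assume X: "\<forall>i. X i \<in> UNIV - {t}" "X \<longlonglongrightarrow> t"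
  define q where "q i x = (u (X i) x - u t x) / (X i - t)" for i x
  have "((\<integral>x. u (X i) x \<partial>M) - (\<integral>x. u t x \<partial>M)) / (X i - t) = (\<integral>x. q i x \<partial>M)" for i
    unfolding q_def using integrable by simp
  moreover have "(\<lambda>i. \<integral>x. q i x \<partial>M) \<longlonglongrightarrow> (\<integral>x. u' x \<partial>M)"
  proof (rule integral_dominated_convergence[where w="\<lambda>_. C"])
    show "AE x in M. (\<lambda>i. q i x) \<longlonglongrightarrow> u' x"
      using deriv X unfolding q_def has_field_derivative_iff tendsto_at_iff_sequentially comp_def
      by (intro AE_I2) blast
    show "AE x in M. norm (q i x) \<le> C" for i
      using Lipschitz X(1) by (intro AE_I2) (simp add: q_def abs_divide divide_le_eq)
  qed (use u' integrable in \<open>auto simp: q_def\<close>)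
  ultimately show "(\<lambda>i. ((\<integral>x. u (X i) x \<partial>M) - (\<integral>x. u t x \<partial>M)) / (X i - t)) \<longlonglongrightarrow> (\<integral>x. u' x \<partial>M)"
    by simp
qed

lemma integral_tendsto_of_has_real_derivative:
  assumes deriv: "\<And>t. (K has_real_derivative G t) (at t)" and lim: "(K \<longlongrightarrow> L) at_top"
  shows "\<forall>T\<ge>0. G integrable_on {0..T}" and "((\<lambda>T. integral {0..T} G) \<longlongrightarrow> L - K 0) at_top"
proof -
  have ftc: "(G has_integral (K T - K 0)) {0..T}" if "T \<ge> 0" for T
    using that deriv
    by (intro fundamental_theorem_of_calculus)
      (auto simp: has_real_derivative_iff_has_vector_derivative has_vector_derivative_at_within)
  then show "\<forall>T\<ge>0. G integrable_on {0..T}" by blast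
  have "((\<lambda>T. K T - K 0) \<longlongrightarrow> L - K 0) at_top"
    using lim by (intro tendsto_diff tendsto_const)
  moreover have "\<forall>\<^sub>F T in at_top. K T - K 0 = integral {0..T} G"
    using eventually_ge_at_top[of 0] by eventually_elim (simp add: integral_unique[OF ftc])
  ultimately show "((\<lambda>T. integral {0..T} G) \<longlongrightarrow> L - K 0) at_top"
    by (rule Lim_transform_eventually)
qed

lemma integral_Pair:
  fixes f :: "'a \<Rightarrow> 'b::{banach, second_countable_topology}" and g :: "'a \<Rightarrow> 'c::{banach, second_countable_topology}"
  assumes f: "integrable M f" and g: "integrable M g"
  shows "(\<integral>x. (f x, g x) \<partial>M) = (integral\<^sup>L M f, integral\<^sup>L M g)"
proof -
  note left = bounded_linear_Pair[OF bounded_linear_ident bounded_linear_zero]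
  note right = bounded_linear_Pair[OF bounded_linear_zero bounded_linear_ident]
  have "(\<integral>x. (f x, g x) \<partial>M) = (\<integral>x. (f x, 0) + (0, g x) \<partial>M)"
    by simp
  also have "\<dots> = (\<integral>x. (f x, 0) \<partial>M) + (\<integral>x. (0, g x) \<partial>M)"
    by (rule Bochner_Integration.integral_add[OF integrable_bounded_linear[OF left f]
          integrable_bounded_linear[OF right g]])
  also have "\<dots> = (integral\<^sup>L M f, integral\<^sup>L M g)"
    unfolding integral_bounded_linear[OF left f] integral_bounded_linear[OF right g] by simp
  finally show ?thesis .
qed

locale invariant_flow = prob_space \<mu>
  for \<mu> :: "(real^'m) measure" +
  fixes Lam :: "(real^'m) set" and g :: "real^'m \<Rightarrow> real^'m" and fl :: "real \<Rightarrow> real^'m \<Rightarrow> real^'m"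
  assumes compact: "compact Lam"
    and flow: "is_flow_on g fl Lam"
    and space_eq: "space \<mu> = Lam" and sets_eq: "sets \<mu> = sets (restrict_space borel Lam)"
    and preserving: "\<forall>t. \<forall>A\<in>sets \<mu>. fl t -` A \<inter> Lam \<in> sets \<mu> \<and> measure \<mu> (fl t -` A \<inter> Lam) = measure \<mu> A"
begin

lemma flow_0: "y \<in> Lam \<Longrightarrow> fl 0 y = y"
  and flow_in: "y \<in> Lam \<Longrightarrow> fl t y \<in> Lam"
  and flow_has_vector_derivative: "y \<in> Lam \<Longrightarrow> ((\<lambda>s. fl s y) has_vector_derivative g (fl t y)) (at t)"
  using flow unfolding is_flow_on_def by auto

lemma measurable_flow: "fl t \<in> measurable \<mu> \<mu>"
  by (rule measurableI) (use flow_in preserving space_eq in auto)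

lemma distr_flow: "distr \<mu> \<mu> (fl t) = \<mu>"
proof (rule measure_eqI)
  fix A assume "A \<in> sets (distr \<mu> \<mu> (fl t))"
  then show "emeasure (distr \<mu> \<mu> (fl t)) A = emeasure \<mu> A"
    using preserving space_eq by (simp add: emeasure_distr[OF measurable_flow] emeasure_eq_measure)
qed simp

lemma integral_flow:
  fixes q :: "real^'m \<Rightarrow> 'b::{banach, second_countable_topology}"
  shows "q \<in> borel_measurable \<mu> \<Longrightarrow> (\<integral>x. q (fl t x) \<partial>\<mu>) = (\<integral>x. q x \<partial>\<mu>)"
  using integral_distr[OF measurable_flow, of q t] by (simp add: distr_flow)

lemma borel_measurable_continuous:
  fixes q :: "real^'m \<Rightarrow> 'b::topological_space"
  assumes "continuous_on UNIV q"
  shows "q \<in> borel_measurable \<mu>"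
  using measurable_restrict_space1[OF borel_measurable_continuous_onI[OF assms]]
  by (simp add: measurable_cong_sets[OF sets_eq refl])

lemma bounded_continuous:
  fixes q :: "real^'m \<Rightarrow> 'b::real_normed_vector"
  assumes "continuous_on UNIV q"
  obtains B where "\<And>y. y \<in> Lam \<Longrightarrow> norm (q y) \<le> B"
proof -
  have "bounded (q ` Lam)"
    using assms compact by (intro compact_imp_bounded compact_continuous_image) (auto intro: continuous_on_subset)
  then show ?thesis using that unfolding bounded_iff by auto
qed

lemma integrable_bounded:
  fixes q :: "real^'m \<Rightarrow> 'b::{banach, second_countable_topology}"
  assumes "q \<in> borel_measurable \<mu>" and "\<And>y. y \<in> Lam \<Longrightarrow> norm (q y) \<le> B"
  shows "integrable \<mu> q"
  using assms space_eq by (intro integrable_const_bound[where B=B] AE_I2) auto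

lemma integrable_continuous:
  fixes q :: "real^'m \<Rightarrow> 'b::{banach, second_countable_topology}"
  assumes "continuous_on UNIV q"
  shows "integrable \<mu> q"
  using bounded_continuous[OF assms] integrable_bounded[OF borel_measurable_continuous[OF assms]]
  by metis

text \<open>Differentiation under the integral is justified by a Lipschitz bound in time, which comes
  from the boundedness of the Lie derivative on the compact invariant set.\<close>
lemma has_real_derivative_integral_flow:
  fixes \<phi> k :: "real^'m \<Rightarrow> real"
  assumes \<phi>: "continuous_on UNIV \<phi>" and k: "continuous_on UNIV k" "\<And>y. k differentiable (at y)"
    and Lk: "continuous_on UNIV (lie_derivative g k)"
  shows "((\<lambda>t. \<integral>x. \<phi> x * k (fl t x) \<partial>\<mu>) has_real_derivative
          (\<integral>x. \<phi> x * lie_derivative g k (fl t x) \<partial>\<mu>)) (at t)"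
proof -
  obtain B\<phi> where B\<phi>: "\<And>y. y \<in> Lam \<Longrightarrow> \<bar>\<phi> y\<bar> \<le> B\<phi>"
    using bounded_continuous[OF \<phi>] by auto
  obtain Bk where Bk: "\<And>y. y \<in> Lam \<Longrightarrow> \<bar>k y\<bar> \<le> Bk"
    using bounded_continuous[OF k(1)] by auto
  obtain BL where BL: "\<And>y. y \<in> Lam \<Longrightarrow> \<bar>lie_derivative g k y\<bar> \<le> BL"
    using bounded_continuous[OF Lk] by auto
  have [measurable]: "\<phi> \<in> borel_measurable \<mu>" "k \<in> borel_measurable \<mu>"
    "lie_derivative g k \<in> borel_measurable \<mu>" "fl s \<in> measurable \<mu> \<mu>" for s
    using \<phi> k Lk by (auto intro: borel_measurable_continuous measurable_flow)
  have deriv: "((\<lambda>s. k (fl s x)) has_real_derivative lie_derivative g k (fl s x)) (at s)"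
    if "x \<in> Lam" for x s
    using that k by (intro has_real_derivative_lie_derivative flow_has_vector_derivative)
  have Lipschitz: "\<bar>\<phi> x * k (fl s x) - \<phi> x * k (fl t x)\<bar> \<le> (B\<phi> * BL) * \<bar>s - t\<bar>"
    if x: "x \<in> Lam" for x s
  proof -
    have "\<bar>k (fl s x) - k (fl t x)\<bar> \<le> BL * \<bar>s - t\<bar>"
      using field_differentiable_bound[of UNIV "\<lambda>s. k (fl s x)" "\<lambda>s. lie_derivative g k (fl s x)" BL s t]
        deriv[OF x] BL flow_in[OF x] by auto
    then show ?thesis
      using B\<phi>[OF x] by (simp add: right_diff_distrib[symmetric] abs_mult mult_mono' mult.assoc)
  qed
  show ?thesis
  proof (rule has_real_derivative_integral_Lipschitz[where C="B\<phi> * BL"])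
    show "integrable \<mu> (\<lambda>x. \<phi> x * k (fl s x))" for s
      using B\<phi> Bk flow_in
      by (intro integrable_bounded[where B="B\<phi> * Bk"]) (auto simp: abs_mult intro: mult_mono')
    show "x \<in> space \<mu> \<Longrightarrow>
        ((\<lambda>s. \<phi> x * k (fl s x)) has_real_derivative \<phi> x * lie_derivative g k (fl t x)) (at t)" for x
      using deriv[of x t] space_eq by (simp add: DERIV_cmult)
    show "(\<lambda>x. \<phi> x * lie_derivative g k (fl t x)) \<in> borel_measurable \<mu>"
      by measurable
  qed (use Lipschitz space_eq finite_measure_axioms in auto)
qed

lemma integral_lie_derivative_eq_0:
  fixes h :: "real^'m \<Rightarrow> 'b::euclidean_space"
  assumes h: "continuous_on UNIV h" "\<And>y. h differentiable (at y)"
    and Lh: "continuous_on UNIV (lie_derivative g h)"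
  shows "integral\<^sup>L \<mu> (lie_derivative g h) = 0"
proof (rule euclidean_eqI)
  fix b :: 'b
  define k where "k = (\<lambda>y. h y \<bullet> b)"
  have Lk: "lie_derivative g k = (\<lambda>y. lie_derivative g h y \<bullet> b)"
    unfolding k_def using lie_derivative_bounded_linear[OF bounded_linear_inner_left h(2)] by (simp add: fun_eq_iff)
  have k: "continuous_on UNIV k" "\<And>y. k differentiable (at y)" "continuous_on UNIV (lie_derivative g k)"
    unfolding Lk unfolding k_def
    using bounded_linear.continuous_on[OF bounded_linear_inner_left] h Lh
      differentiable_compose[OF bounded_linear_imp_differentiable[OF bounded_linear_inner_left] h(2)]
    by blast+
  \<comment> \<open>The integral of \<open>k\<close> along the flow is constant in time, and its derivative at
    \<open>t = 0\<close> is the integral of the Lie derivative.\<close>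
  have "((\<lambda>t. \<integral>x. 1 * k (fl t x) \<partial>\<mu>) has_real_derivative (\<integral>x. 1 * lie_derivative g k (fl 0 x) \<partial>\<mu>)) (at 0)"
    using k by (intro has_real_derivative_integral_flow) auto
  moreover have "(\<lambda>t. \<integral>x. 1 * k (fl t x) \<partial>\<mu>) = (\<lambda>t. \<integral>x. k x \<partial>\<mu>)"
    using integral_flow[OF borel_measurable_continuous[OF k(1)]] by simp
  moreover have "(\<integral>x. 1 * lie_derivative g k (fl 0 x) \<partial>\<mu>) = (\<integral>x. lie_derivative g k x \<partial>\<mu>)"
    using flow_0 space_eq by (intro Bochner_Integration.integral_cong) auto
  ultimately have "(\<integral>x. lie_derivative g k x \<partial>\<mu>) = 0"
    using DERIV_const DERIV_unique by metis
  then show "integral\<^sup>L \<mu> (lie_derivative g h) \<bullet> b = 0 \<bullet> b"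
    using integral_inner_left[OF integrable_continuous[OF Lh]] by (simp add: Lk)
qed

end

locale mixing_flow = invariant_flow \<mu> Lam g fl
  for \<mu> :: "(real^'m) measure" and Lam g fl +
  assumes mixing: "\<forall>(\<phi>::real^'m \<Rightarrow> real) (\<psi>::real^'m \<Rightarrow> real). \<phi> \<in> borel_measurable \<mu> \<and> \<psi> \<in> borel_measurable \<mu> \<and>
        integrable \<mu> (\<lambda>x. (\<phi> x)\<^sup>2) \<and> integrable \<mu> (\<lambda>x. (\<psi> x)\<^sup>2) \<longrightarrow>
        ((\<lambda>t. \<integral>x. \<phi> x * \<psi> (fl t x) \<partial>\<mu>) \<longlongrightarrow> (\<integral>x. \<phi> x \<partial>\<mu>) * (\<integral>x. \<psi> x \<partial>\<mu>)) at_top"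
begin

lemma correlation_tendsto:
  fixes \<phi> \<psi> :: "real^'m \<Rightarrow> real"
  assumes "continuous_on UNIV \<phi>" and "continuous_on UNIV \<psi>"
  shows "((\<lambda>t. \<integral>x. \<phi> x * \<psi> (fl t x) \<partial>\<mu>) \<longlongrightarrow> (\<integral>x. \<phi> x \<partial>\<mu>) * (\<integral>x. \<psi> x \<partial>\<mu>)) at_top"
proof -
  have square_integrable: "integrable \<mu> (\<lambda>x. (q x)\<^sup>2)" if "continuous_on UNIV q"
    for q :: "real^'m \<Rightarrow> real"
    using that by (intro integrable_continuous continuous_intros)
  show ?thesis
    using mixing[rule_format, of \<phi> \<psi>] assms borel_measurable_continuous[OF assms(1)]
      borel_measurable_continuous[OF assms(2)] square_integrable[OF assms(1)] square_integrable[OF assms(2)]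
    by simp
qed

lemma integral_correlation_lie_derivative:
  fixes \<phi> k :: "real^'m \<Rightarrow> real"
  assumes \<phi>: "continuous_on UNIV \<phi>" "(\<integral>x. \<phi> x \<partial>\<mu>) = 0"
    and k: "continuous_on UNIV k" "\<And>y. k differentiable (at y)"
    and Lk: "continuous_on UNIV (lie_derivative g k)"
  shows "\<forall>T\<ge>0. (\<lambda>t. \<integral>x. \<phi> x * lie_derivative g k (fl t x) \<partial>\<mu>) integrable_on {0..T}"
    and "((\<lambda>T. integral {0..T} (\<lambda>t. \<integral>x. \<phi> x * lie_derivative g k (fl t x) \<partial>\<mu>))
          \<longlongrightarrow> - (\<integral>x. \<phi> x * k x \<partial>\<mu>)) at_top"
proof -
  define K where "K = (\<lambda>t. \<integral>x. \<phi> x * k (fl t x) \<partial>\<mu>)"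
  have deriv: "(K has_real_derivative (\<integral>x. \<phi> x * lie_derivative g k (fl t x) \<partial>\<mu>)) (at t)" for t
    unfolding K_def by (rule has_real_derivative_integral_flow[OF \<phi>(1) k Lk])
  have lim: "(K \<longlongrightarrow> 0) at_top"
    using correlation_tendsto[OF \<phi>(1) k(1)] \<phi>(2) unfolding K_def by simp
  have "K 0 = (\<integral>x. \<phi> x * k x \<partial>\<mu>)"
    unfolding K_def using flow_0 space_eq by (intro Bochner_Integration.integral_cong) auto
  then show "((\<lambda>T. integral {0..T} (\<lambda>t. \<integral>x. \<phi> x * lie_derivative g k (fl t x) \<partial>\<mu>))
          \<longlongrightarrow> - (\<integral>x. \<phi> x * k x \<partial>\<mu>)) at_top"
    using integral_tendsto_of_has_real_derivative(2)[OF deriv lim] by simp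
  show "\<forall>T\<ge>0. (\<lambda>t. \<integral>x. \<phi> x * lie_derivative g k (fl t x) \<partial>\<mu>) integrable_on {0..T}"
    using integral_tendsto_of_has_real_derivative(1)[OF deriv lim] .
qed

lemma E0_is_lie_derivative:
  fixes f :: "real^'m \<Rightarrow> real^'p" and h :: "real^'m \<Rightarrow> real^'n"
  assumes f: "continuous_on UNIV f" "integral\<^sup>L \<mu> f = 0"
    and h: "continuous_on UNIV h" "\<And>y. h differentiable (at y)"
    and Lh: "continuous_on UNIV (lie_derivative g h)"
  shows "E0_is \<mu> fl (\<lambda>x. (f x, - (1/2) *\<^sub>R lie_derivative g h x)) (\<chi> i j. \<integral>x. f x $ i * h x $ j \<partial>\<mu>)"
  unfolding E0_is_def
proof (intro allI)
  fix i j
  define T where "T v = - (1/2) * v $ j" for v :: "real^'n"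
  have T: "bounded_linear T"
    unfolding T_def by (intro bounded_linear_compose[OF bounded_linear_mult_right bounded_linear_vec_nth])
  have Lk: "lie_derivative g (\<lambda>y. T (h y)) = (\<lambda>y. T (lie_derivative g h y))"
    using lie_derivative_bounded_linear[OF T h(2)] by (simp add: fun_eq_iff)
  have \<phi>: "continuous_on UNIV (\<lambda>x. f x $ i)" "(\<integral>x. f x $ i \<partial>\<mu>) = 0"
    using bounded_linear.continuous_on[OF bounded_linear_vec_nth f(1)]
      integral_bounded_linear[OF bounded_linear_vec_nth integrable_continuous[OF f(1)]] f(2)
    by simp_all
  have k: "continuous_on UNIV (\<lambda>y. T (h y))" "\<And>y. (\<lambda>y. T (h y)) differentiable (at y)"
    "continuous_on UNIV (lie_derivative g (\<lambda>y. T (h y)))"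
    unfolding Lk
    using bounded_linear.continuous_on[OF T h(1)] bounded_linear.continuous_on[OF T Lh]
      differentiable_compose[OF bounded_linear_imp_differentiable[OF T] h(2)]
    by blast+
  note correlation = integral_correlation_lie_derivative[OF \<phi> k, unfolded Lk]
  have "2 * - (\<integral>x. f x $ i * T (h x) \<partial>\<mu>) = (\<integral>x. f x $ i * h x $ j \<partial>\<mu>)"
  proof -
    have "(\<lambda>x. f x $ i * T (h x)) = (\<lambda>x. - (1/2) * (f x $ i * h x $ j))"
      by (simp add: T_def fun_eq_iff)
    then show ?thesis by simp
  qed
  then show "(\<forall>T'\<ge>0. (\<lambda>t. \<integral>x. fst (f x, - (1/2) *\<^sub>R lie_derivative g h x) $ i *
        snd (f (fl t x), - (1/2) *\<^sub>R lie_derivative g h (fl t x)) $ j \<partial>\<mu>) integrable_on {0..T'}) \<and>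
      ((\<lambda>T'. 2 * integral {0..T'} (\<lambda>t. \<integral>x. fst (f x, - (1/2) *\<^sub>R lie_derivative g h x) $ i *
        snd (f (fl t x), - (1/2) *\<^sub>R lie_derivative g h (fl t x)) $ j \<partial>\<mu>))
        \<longlongrightarrow> (\<chi> i j. \<integral>x. f x $ i * h x $ j \<partial>\<mu>) $ i $ j) at_top"
    using correlation(1) tendsto_mult_left[OF correlation(2), of 2] by (simp add: T_def)
qed

end

theorem proposition4p2:
  fixes r :: nat and Lam :: "(real^'m) set" and g :: "real^'m \<Rightarrow> real^'m"
    and fl :: "real \<Rightarrow> real^'m \<Rightarrow> real^'m" and \<mu> :: "(real^'m) measure"
    and R :: "real^'m^'m"
    and f :: "real^'m \<Rightarrow> real^'p" and h :: "real^'m \<Rightarrow> real^'n"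
  assumes r: "r \<ge> 1"
    and Lam: "compact Lam"
    and g: "Ck r g"
    and flow: "is_flow_on g fl Lam"
    and prob: "prob_space \<mu>"
    and space: "space \<mu> = Lam" and sets: "sets \<mu> = sets (restrict_space borel Lam)"
    and inv: "\<forall>t. \<forall>A\<in>sets \<mu>. fl t -` A \<inter> Lam \<in> sets \<mu> \<and> measure \<mu> (fl t -` A \<inter> Lam) = measure \<mu> A"
    and ergodic: "\<forall>A\<in>sets \<mu>. (\<forall>t. fl t -` A \<inter> Lam = A) \<longrightarrow> measure \<mu> A = 0 \<or> measure \<mu> A = 1"
    and mixing: "\<forall>(\<phi>::real^'m \<Rightarrow> real) (\<psi>::real^'m \<Rightarrow> real). \<phi> \<in> borel_measurable \<mu> \<and> \<psi> \<in> borel_measurable \<mu> \<and>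
        integrable \<mu> (\<lambda>x. (\<phi> x)\<^sup>2) \<and> integrable \<mu> (\<lambda>x. (\<psi> x)\<^sup>2) \<longrightarrow>
        ((\<lambda>t. \<integral>x. \<phi> x * \<psi> (fl t x) \<partial>\<mu>) \<longlongrightarrow> (\<integral>x. \<phi> x \<partial>\<mu>) * (\<integral>x. \<psi> x \<partial>\<mu>)) at_top"
    and R2: "R ** R = mat 1"
    and RLam: "(\<lambda>y. R *v y) ` Lam = Lam"
    and Rinv: "\<forall>A\<in>sets \<mu>. measure \<mu> ((\<lambda>y. R *v y) -` A \<inter> Lam) = measure \<mu> A"
    and gR: "\<forall>y\<in>Lam. g (R *v y) = - (R *v g y)"
    and f: "Ck r f" and fR: "\<forall>y\<in>Lam. f (R *v y) = f y" and f0: "integral\<^sup>L \<mu> f = 0"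
    and h: "Ck (r + 1) h" and hR: "\<forall>y. h (R *v y) = h y"
  shows "\<exists>v :: real^'m \<Rightarrow> ((real^'p) \<times> (real^'n)).
           admissible r Lam R \<mu> v \<and>
           E0_is \<mu> fl v (\<chi> i j. \<integral>x. f x $ i * h x $ j \<partial>\<mu>)"
proof -
  interpret mixing_flow \<mu> Lam g fl
    using prob Lam flow space sets inv mixing
    unfolding mixing_flow_def invariant_flow_def invariant_flow_axioms_def mixing_flow_axioms_def
    by blast
  have hd: "\<And>y. h differentiable (at y)" and Lh: "Ck r (lie_derivative g h)"
    using h Ck_lie_derivative[OF g] by simp_all
  have fc: "continuous_on UNIV f" and hc: "continuous_on UNIV h"
    and Lhc: "continuous_on UNIV (lie_derivative g h)"
    using f h Lh by (simp_all add: Ck_imp_continuous_on)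
  define v where "v = (\<lambda>x. (f x, - (1/2) *\<^sub>R lie_derivative g h x))"
  have "Ck r v"
    unfolding v_def by (intro Ck_Pair f Ck_bounded_linear[OF bounded_linear_scaleR_right Lh])
  moreover have "v (R *v y) = (fst (v y), - snd (v y))" if "y \<in> Lam" for y
    using lie_derivative_reflect[OF matrix_vector_mul_bounded_linear hd hR[rule_format] gR[rule_format, OF that]]
      fR that by (simp add: v_def)
  moreover have "integral\<^sup>L \<mu> v = 0"
  proof -
    have "continuous_on UNIV (\<lambda>x. - (1/2) *\<^sub>R lie_derivative g h x)"
      using Lhc by (intro continuous_intros)
    from integral_Pair[OF integrable_continuous[OF fc] integrable_continuous[OF this]]
    show ?thesis
      unfolding v_def using integral_lie_derivative_eq_0[OF hc hd Lhc] f0 by (simp add: zero_prod_def)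
  qed
  ultimately have "admissible r Lam R \<mu> v"
    unfolding admissible_def by blast
  moreover have "E0_is \<mu> fl v (\<chi> i j. \<integral>x. f x $ i * h x $ j \<partial>\<mu>)"
    unfolding v_def using fc f0 hc hd Lhc by (rule E0_is_lie_derivative)
  ultimately show ?thesis by blast
qed

end
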